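(* Let $b>0$ and $h:\mathbb{R}_{\ge0}\to\mathbb{R}$, $h(x)=x$ if $x\le b$ and $h(x)=0$ otherwise. For $j=1,\dots,n$ let $\Theta_j$ be a positive random variable with continuous density $\theta_j$ on $(0,\infty)$ such that $\int_z^\infty\theta_j(y)/y\,dy<\infty$ for all $z>0$, and define for $z>0$ \[ \Omega_j(z)=\int_z^\infty\frac{\theta_j(y)}{y}\,dy-\theta_j(z). \] Let $\mathcal{I}:\mathbb{R}^n_{\ge0}\to\mathbb{R}^n_{>0}$ be differentiable (not necessarily monotone) and define $f_j(p)=\mathbb{E}_{\Theta_j}\big[h(\mathcal{I}_j(p)/\Theta_j)\big]$, $f=(f_1,\dots,f_n)^T$. Then for every $p$, \[ |||\nabla f(p)|||_\infty\le\max_i\big|\Omega_i\big(\mathcal{I}_i(p)/b\big)\big|\ |||\nabla\mathcal{I}(p)|||_\infty . \]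
   Context: Gradient convention: $[\nabla f(p)]_{ij}=\partial f_j(p)/\partial p_i$; $|||A|||_\infty=\max_i\sum_j|A_{ij}|$. *)

theory Defs
  imports "HOL-Probability.Probability"
begin

definition hcut :: "real \<Rightarrow> real \<Rightarrow> real" where
  "hcut b x = (if x \<le> b then x else 0)"

definition Omega :: "(real \<Rightarrow> real) \<Rightarrow> real \<Rightarrow> real" where
  "Omega \<theta> z = (LINT y:{z..}|lborel. \<theta> y / y) - \<theta> z"

text \<open>Infinity-norm of the gradient of a map with derivative F, where the gradient
  has entries [grad]_(i,j) = d F_j / d p_i = (F (axis i 1)) $ j; the norm is
  the maximum over rows i of the row sums over j.\<close>
definition grad_inf_norm :: "(real^'n \<Rightarrow> real^'n) \<Rightarrow> real" where
  "grad_inf_norm F = Max (range (\<lambda>i. \<Sum>j\<in>UNIV. \<bar>F (axis i 1) $ j\<bar>))"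

definition orthant :: "(real^'n) set" where
  "orthant = {p. \<forall>i. p $ i \<ge> 0}"

end

theory Submission imports Defs begin

(*
  Each component f_j is a scalar function of I_j alone: f_j(p) = G_j(I_j(p)) with
  G_j(x) = E[h(x / Theta_j)].  Since Theta_j > 0 has density theta_j, for x > 0
      G_j(x) = x * \<integral>_{x/b}^\<infinity> theta_j(y)/y dy,
  and by the fundamental theorem of calculus G_j'(x) = Omega_j(x/b).  By the chain rule
  the derivative of f at p is v \<mapsto> (Omega_j(I_j(p)/b) * (I'(p) v)_j)_j, i.e. the gradient of f
  is the gradient of I with its columns scaled by Omega_j(I_j(p)/b); such a scaling
  multiplies every row sum by at most max_j |Omega_j(I_j(p)/b)|.
*)

text \<open>For \<open>\<phi>\<close> continuous on \<open>(0,\<infinity>)\<close> and integrable on every tail \<open>[z,\<infinity>)\<close>, the map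
  \<open>z \<mapsto> \<integral>\<^sub>z\<^sup>\<infinity> \<phi>\<close> has derivative \<open>-\<phi>(z)\<close>: it differs from \<open>-\<integral>\<^sub>a\<^sup>z \<phi>\<close> by a constant.\<close>

lemma tail_integral_has_real_derivative:
  fixes \<phi> :: "real \<Rightarrow> real"
  assumes cont: "continuous_on {0<..} \<phi>"
    and int: "\<And>z. z > 0 \<Longrightarrow> set_integrable lborel {z..} \<phi>"
    and z0: "z0 > 0"
  shows "((\<lambda>z. LINT y:{z..}|lborel. \<phi> y) has_real_derivative - \<phi> z0) (at z0)"
proof -
  define a where "a = z0 / 2"
  have a: "a > 0" "a < z0" using z0 by (auto simp: a_def)
  have ia: "set_integrable lborel {a..} \<phi>" using int[OF a(1)] .
  have split: "(LINT y:{z..}|lborel. \<phi> y) = (LINT y:{a..}|lborel. \<phi> y) - integral {a..z} \<phi>"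
    if z: "z \<in> {a<..}" for z
  proof -
    have i1: "set_integrable lborel {a..z} \<phi>"
      by (rule set_integrable_subset[OF ia]) auto
    have i2: "set_integrable lborel {z<..} \<phi>"
      by (rule set_integrable_subset[OF ia]) (use z in auto)
    have i3: "set_integrable lborel {z..} \<phi>"
      by (rule set_integrable_subset[OF ia]) (use z in auto)
    have "{a..} = {a..z} \<union> {z<..}" using z by auto
    then have "(LINT y:{a..}|lborel. \<phi> y) = (LINT y:{a..z}|lborel. \<phi> y) + (LINT y:{z<..}|lborel. \<phi> y)"
      using set_integral_Un[OF _ i1 i2] by (simp add: disjoint_iff)
    moreover have "(LINT y:{a..z}|lborel. \<phi> y) = integral {a..z} \<phi>"
      using set_borel_integral_eq_integral(2)[OF i1] .
    moreover have "(LINT y:{z..}|lborel. \<phi> y) = (LINT y:{z<..}|lborel. \<phi> y)"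
    proof (rule set_integral_cong_set)
      show "set_borel_measurable lborel {z..} \<phi>"
        using i3 by (simp add: set_borel_measurable_def set_integrable_def)
      show "set_borel_measurable lborel {z<..} \<phi>"
        using i2 by (simp add: set_borel_measurable_def set_integrable_def)
      show "AE x in lborel. (x \<in> {z<..}) = (x \<in> {z..})"
        using AE_lborel_singleton[of z] by eventually_elim auto
    qed
    ultimately show ?thesis by simp
  qed
  have "continuous_on {a..2*z0} \<phi>"
    by (rule continuous_on_subset[OF cont]) (use a in auto)
  then have "((\<lambda>z. integral {a..z} \<phi>) has_real_derivative \<phi> z0) (at z0 within {a..2*z0})"
    by (rule integral_has_real_derivative) (use a in auto)
  then have "((\<lambda>z. integral {a..z} \<phi>) has_real_derivative \<phi> z0) (at z0)"
    using at_within_Icc_at[of a z0 "2*z0"] a z0 by simp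
  then have "((\<lambda>z. (LINT y:{a..}|lborel. \<phi> y) - integral {a..z} \<phi>) has_real_derivative - \<phi> z0) (at z0)"
    by (auto intro!: derivative_eq_intros)
  then show ?thesis
    by (rule has_field_derivative_transform_within_open[of _ _ _ "{a<..}"]) (use a split in auto)
qed

lemma density_vanishes_on_nonpos:
  fixes X :: "'a \<Rightarrow> real"
  assumes d: "distributed M lborel X (\<lambda>y. ennreal (t y))"
    and t0: "\<And>y. 0 \<le> t y"
    and pos: "\<And>\<omega>. \<omega> \<in> space M \<Longrightarrow> X \<omega> > 0"
  shows "AE y in lborel. y \<le> 0 \<longrightarrow> t y = 0"
proof -
  have "(\<integral>\<^sup>+y. ennreal (t y) * indicator {..0} y \<partial>lborel) = emeasure M (X -` {..0} \<inter> space M)"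
    using distributed_emeasure[OF d, of "{..0}"] by simp
  also have "X -` {..0} \<inter> space M = {}" using pos by force
  finally have "(\<integral>\<^sup>+y. ennreal (t y) * indicator {..0} y \<partial>lborel) = 0" by simp
  then have "AE y in lborel. ennreal (t y) * indicator {..0} y = 0"
    using distributed_real_measurable[OF t0 d] by (subst (asm) nn_integral_0_iff_AE) auto
  then show ?thesis
  proof eventually_elim
    case (elim y)
    then show ?case using t0[of y] by (cases "y \<le> 0") (auto simp: indicator_def)
  qed
qed

lemma hcut_div_eq:
  assumes "b > 0" "y > 0"
  shows "hcut b (x / y) = indicator {x/b..} y * (x / y)"
proof -
  have "(x / y \<le> b) = (x / b \<le> y)" using assms by (simp add: field_simps)
  then show ?thesis by (simp add: hcut_def indicator_def)
qed

lemma expected_truncation_eq: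
  fixes \<theta> :: "real \<Rightarrow> real" and X :: "'a \<Rightarrow> real"
  assumes b: "b > 0"
    and d: "distributed M lborel X (\<lambda>y. ennreal (\<theta> y))"
    and pos: "\<And>\<omega>. \<omega> \<in> space M \<Longrightarrow> X \<omega> > 0"
    and th: "\<And>y. y > 0 \<Longrightarrow> \<theta> y \<ge> 0"
    and x: "x > 0"
  shows "integral\<^sup>L M (\<lambda>\<omega>. hcut b (x / X \<omega>)) = x * (LINT y:{x/b..}|lborel. \<theta> y / y)"
proof -
  txt \<open>Only the positive part of \<open>\<theta>\<close> is a density in the measure-theoretic sense.\<close>
  define t where "t = (\<lambda>y. max 0 (\<theta> y))"
  have dt: "distributed M lborel X (\<lambda>y. ennreal (t y))"
    using d by (simp add: t_def ennreal_max_0)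
  have t0: "\<And>y. 0 \<le> t y" by (simp add: t_def)
  have [measurable]: "t \<in> borel_measurable lborel"
    using distributed_real_measurable[OF _ dt] t0 by blast
  have [measurable]: "(\<lambda>y. hcut b (x / y)) \<in> borel_measurable lborel"
    unfolding hcut_def by measurable
  have t_vanishes: "AE y in lborel. y \<le> 0 \<longrightarrow> t y = 0"
    by (rule density_vanishes_on_nonpos[OF dt t0 pos])
  have tail_pos: "y > 0" if "y \<in> {x/b..}" for y
    using that x b by (auto intro: less_le_trans[OF divide_pos_pos])
  have "integral\<^sup>L M (\<lambda>\<omega>. hcut b (x / X \<omega>)) = (\<integral>y. t y * hcut b (x / y) \<partial>lborel)"
    using distributed_integral[OF dt] t0 by simp
  also have "\<dots> = (\<integral>y. (indicator {x/b..} y *\<^sub>R (t y / y)) * x \<partial>lborel)"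
  proof (rule integral_cong_AE)
    show "AE y in lborel. t y * hcut b (x / y) = indicator {x / b..} y *\<^sub>R (t y / y) * x"
      using t_vanishes
    proof eventually_elim
      case (elim y)
      show ?case
      proof (cases "y > 0")
        case True
        then show ?thesis by (simp add: hcut_div_eq[OF b])
      next
        case False
        then show ?thesis using elim tail_pos[of y] by (auto simp: indicator_def)
      qed
    qed
  qed measurable
  also have "\<dots> = (LINT y:{x/b..}|lborel. t y / y) * x"
    unfolding set_lebesgue_integral_def by (rule integral_mult_left_zero)
  also have "(LINT y:{x/b..}|lborel. t y / y) = (LINT y:{x/b..}|lborel. \<theta> y / y)"
  proof (rule set_lebesgue_integral_cong)
    show "\<forall>y. y \<in> {x/b..} \<longrightarrow> t y / y = \<theta> y / y"
      using tail_pos th by (simp add: t_def)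
  qed simp
  finally show ?thesis by simp
qed

lemma expected_truncation_has_real_derivative:
  fixes \<theta> :: "real \<Rightarrow> real" and X :: "'a \<Rightarrow> real"
  assumes b: "b > 0"
    and d: "distributed M lborel X (\<lambda>y. ennreal (\<theta> y))"
    and pos: "\<And>\<omega>. \<omega> \<in> space M \<Longrightarrow> X \<omega> > 0"
    and cont: "continuous_on {0<..} \<theta>"
    and th: "\<And>y. y > 0 \<Longrightarrow> \<theta> y \<ge> 0"
    and int: "\<And>z. z > 0 \<Longrightarrow> set_integrable lborel {z..} (\<lambda>y. \<theta> y / y)"
    and x0: "x0 > 0"
  shows "((\<lambda>x. integral\<^sup>L M (\<lambda>\<omega>. hcut b (x / X \<omega>))) has_real_derivative Omega \<theta> (x0/b)) (at x0)"
proof -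
  define L where "L = (\<lambda>z. LINT y:{z..}|lborel. \<theta> y / y)"
  have "continuous_on {0<..} (\<lambda>y. \<theta> y / y)"
    by (intro continuous_intros cont) auto
  then have "(L has_real_derivative - (\<theta> (x0/b) / (x0/b))) (at (x0/b))"
    unfolding L_def by (rule tail_integral_has_real_derivative[OF _ int]) (use x0 b in auto)
  from DERIV_chain2[OF this DERIV_cdivide[OF DERIV_ident, of b]]
  have "((\<lambda>x. L (x/b)) has_real_derivative - (\<theta> (x0/b) / (x0/b)) * (1/b)) (at x0)"
    by simp
  from DERIV_mult[OF DERIV_ident this]
  have "((\<lambda>x. x * L (x/b)) has_real_derivative
               1 * L (x0/b) + - (\<theta> (x0/b) / (x0/b)) * (1/b) * x0) (at x0)" .
  moreover have "1 * L (x0/b) + - (\<theta> (x0/b) / (x0/b)) * (1/b) * x0 = Omega \<theta> (x0/b)"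
    using x0 b by (simp add: Omega_def L_def field_simps)
  ultimately have "((\<lambda>x. x * L (x/b)) has_real_derivative Omega \<theta> (x0/b)) (at x0)"
    by simp
  then show ?thesis
    by (rule has_field_derivative_transform_within_open[of _ _ _ "{0<..}"])
       (use x0 expected_truncation_eq[OF b d pos th] in \<open>auto simp: L_def\<close>)
qed

lemma componentwise_chain_rule:
  fixes I :: "real^'n \<Rightarrow> real^'n" and G :: "'n \<Rightarrow> real \<Rightarrow> real"
  assumes dI: "(I has_derivative I') (at p within S)"
    and dG: "\<And>j. (G j has_real_derivative D j) (at (I p $ j))"
  shows "((\<lambda>q. \<chi> j. G j (I q $ j)) has_derivative (\<lambda>v. \<chi> j. D j * I' v $ j)) (at p within S)"
proof (subst has_derivative_componentwise_within, intro ballI)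
  fix i :: "real^'n" assume "i \<in> Basis"
  then obtain j where i: "i = axis j 1" by (auto simp: Basis_vec_def)
  have "((\<lambda>q. I q $ j) has_derivative (\<lambda>v. I' v $ j)) (at p within S)"
    by (rule bounded_linear.has_derivative[OF bounded_linear_vec_nth dI])
  from has_derivative_compose[OF this dG[unfolded has_field_derivative_def]]
  show "((\<lambda>q. (\<chi> j. G j (I q $ j)) \<bullet> i) has_derivative (\<lambda>v. (\<chi> j. D j * I' v $ j) \<bullet> i)) (at p within S)"
    by (simp add: i flip: cart_eq_inner_axis)
qed

text \<open>The orthant contains a segment in every positive axis direction from each of its points,
  so derivatives within it are unique.\<close>

lemma orthant_derivative_unique:
  fixes f :: "real^'n \<Rightarrow> real^'m"
  assumes "p \<in> orthant"
    and "(f has_derivative F) (at p within orthant)"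
    and "(f has_derivative F') (at p within orthant)"
  shows "F = F'"
proof (rule frechet_derivative_unique_within[OF assms(2,3)])
  fix i :: "real^'n" and e :: real assume "i \<in> Basis" "e > 0"
  then obtain j where i: "i = axis j 1" by (auto simp: Basis_vec_def)
  show "\<exists>d. 0 < \<bar>d\<bar> \<and> \<bar>d\<bar> < e \<and> p + d *\<^sub>R i \<in> orthant"
    by (rule exI[of _ "e/2"]) (use assms(1) \<open>e > 0\<close> in \<open>auto simp: orthant_def i axis_def\<close>)
qed

lemma grad_inf_norm_column_scaling:
  fixes L :: "real^'n \<Rightarrow> real^'n" and D :: "'n \<Rightarrow> real"
  shows "grad_inf_norm (\<lambda>v. \<chi> j. D j * L v $ j) \<le> Max (range (\<lambda>j. \<bar>D j\<bar>)) * grad_inf_norm L"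
  unfolding grad_inf_norm_def
proof (rule Max.boundedI)
  define c where "c = Max (range (\<lambda>j. \<bar>D j\<bar>))"
  have D_le: "\<bar>D j\<bar> \<le> c" for j unfolding c_def by (rule Max_ge) auto
  have c0: "0 \<le> c" using D_le[of undefined] by linarith
  fix a assume "a \<in> range (\<lambda>i. \<Sum>j\<in>UNIV. \<bar>(\<chi> j. D j * L (axis i 1) $ j) $ j\<bar>)"
  then obtain i where a: "a = (\<Sum>j\<in>UNIV. \<bar>D j\<bar> * \<bar>L (axis i 1) $ j\<bar>)"
    by (auto simp: abs_mult)
  also have "\<dots> \<le> (\<Sum>j\<in>UNIV. c * \<bar>L (axis i 1) $ j\<bar>)"
    by (intro sum_mono mult_right_mono D_le) auto
  also have "\<dots> = c * (\<Sum>j\<in>UNIV. \<bar>L (axis i 1) $ j\<bar>)"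
    by (simp add: sum_distrib_left)
  also have "\<dots> \<le> c * Max (range (\<lambda>i. \<Sum>j\<in>UNIV. \<bar>L (axis i 1) $ j\<bar>))"
    by (intro mult_left_mono c0 Max_ge) auto
  finally show "a \<le> c * Max (range (\<lambda>i. \<Sum>j\<in>UNIV. \<bar>L (axis i 1) $ j\<bar>))" .
qed auto

theorem mainTheorem6:
  fixes M :: "'a measure"
    and b :: real
    and \<Theta> :: "'n::finite \<Rightarrow> 'a \<Rightarrow> real"
    and \<theta> :: "'n \<Rightarrow> real \<Rightarrow> real"
    and I :: "real^'n \<Rightarrow> real^'n"
    and I' :: "real^'n \<Rightarrow> real^'n \<Rightarrow> real^'n"
    and f :: "real^'n \<Rightarrow> real^'n"
    and p :: "real^'n"
  assumes "prob_space M"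
    and "b > 0"
    and "\<And>j. distributed M lborel (\<Theta> j) (\<lambda>y. ennreal (\<theta> j y))"
    and "\<And>j \<omega>. \<omega> \<in> space M \<Longrightarrow> \<Theta> j \<omega> > 0"
    and "\<And>j. continuous_on {0<..} (\<theta> j)"
    and "\<And>j y. y > 0 \<Longrightarrow> \<theta> j y \<ge> 0"
    and "\<And>j z. z > 0 \<Longrightarrow> set_integrable lborel {z..} (\<lambda>y. \<theta> j y / y)"
    and "\<And>q j. q \<in> orthant \<Longrightarrow> I q $ j > 0"
    and "\<And>q. q \<in> orthant \<Longrightarrow> (I has_derivative I' q) (at q within orthant)"
    and "\<And>q. f q = (\<chi> j. integral\<^sup>L M (\<lambda>\<omega>. hcut b (I q $ j / \<Theta> j \<omega>)))"
    and "p \<in> orthant"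
  shows "(\<exists>F. (f has_derivative F) (at p within orthant)) \<and>
         (\<forall>F. (f has_derivative F) (at p within orthant) \<longrightarrow>
            grad_inf_norm F \<le> Max (range (\<lambda>i. \<bar>Omega (\<theta> i) (I p $ i / b)\<bar>)) * grad_inf_norm (I' p))"
proof -
  define D where "D = (\<lambda>j. Omega (\<theta> j) (I p $ j / b))"
  define F0 where "F0 = (\<lambda>v. \<chi> j. D j * I' p v $ j)"
  have "((\<lambda>x. integral\<^sup>L M (\<lambda>\<omega>. hcut b (x / \<Theta> j \<omega>))) has_real_derivative D j) (at (I p $ j))" for j
    unfolding D_def
    by (rule expected_truncation_has_real_derivative[OF assms(2-7)]) (use assms(8,11) in auto)
  from componentwise_chain_rule[OF assms(9)[OF assms(11)] this]
  have dF0: "(f has_derivative F0) (at p within orthant)"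
    using ext[of f, OF assms(10)] by (simp add: F0_def)
  have "grad_inf_norm F0 \<le> Max (range (\<lambda>i. \<bar>Omega (\<theta> i) (I p $ i / b)\<bar>)) * grad_inf_norm (I' p)"
    unfolding F0_def D_def by (rule grad_inf_norm_column_scaling)
  with dF0 orthant_derivative_unique[OF assms(11) _ dF0] show ?thesis
    by blast
qed

end
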